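(* Let $R$ be a t-unital ring, $\widetilde R=\mathbb Z\oplus R$ its unitalization, and $N$ a left null-module over $R$. Then (a) $R\otimes_R N=R\otimes_{\widetilde R}N=0$ and $\mathrm{Tor}^{\widetilde R}_1(R,N)=0$; (b) $\mathrm{Hom}_R(R,N)=\mathrm{Hom}_{\widetilde R}(R,N)=0$ and $\mathrm{Ext}^1_{\widetilde R}(R,N)=0$.
   Context: Rings are associative, not necessarily unital. The unitalization $\widetilde R=\mathbb Z\oplus R$ has multiplication $(n+r)(n'+r')=nn'+(nr'+n'r+rr')$, so that $R$ is a two-sided ideal; nonunital $R$-modules are the same as unital $\widetilde R$-modules, and Tor and Ext are computed over the unital ring $\widetilde R$. $R$ is t-unital if the multiplication map $R\otimes_R R\to R$ is an isomorphism. A left $R$-module $N$ is a null-module if $rn=0$ for all $r\in R$, $n\in N$. *)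

theory Defs
  imports "HOL-Library.Poly_Mapping" "HOL-Library.Product_Plus"
begin

definition zsmul :: "int \<Rightarrow> 'a::ab_group_add \<Rightarrow> 'a" where
  "zsmul k x = (\<Sum>i<nat k. x) - (\<Sum>i<nat (- k). x)"

(* Unitalization  R~ = Z (+) R, elements (n, r) standing for n + r *)
type_synonym 'r unitz = "int \<times> 'r"

definition umult :: "'r::ring unitz \<Rightarrow> 'r unitz \<Rightarrow> 'r unitz" where
  "umult s t = (fst s * fst t,
                zsmul (fst s) (snd t) + zsmul (fst t) (snd s) + snd s * snd t)"

definition ract_R :: "'r::ring \<Rightarrow> 'r unitz \<Rightarrow> 'r" where
  "ract_R a s = zsmul (fst s) a + a * snd s"

definition lact_R :: "'r::ring unitz \<Rightarrow> 'r \<Rightarrow> 'r" where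
  "lact_R s a = zsmul (fst s) a + snd s * a"

definition lact_mod :: "('r::ring \<Rightarrow> 'n::ab_group_add \<Rightarrow> 'n) \<Rightarrow> 'r unitz \<Rightarrow> 'n \<Rightarrow> 'n" where
  "lact_mod smul s x = zsmul (fst s) x + smul (snd s) x"

definition left_module :: "('r::ring \<Rightarrow> 'n::ab_group_add \<Rightarrow> 'n) \<Rightarrow> bool" where
  "left_module smul \<longleftrightarrow>
     (\<forall>r x y. smul r (x + y) = smul r x + smul r y) \<and>
     (\<forall>r s x. smul (r + s) x = smul r x + smul s x) \<and>
     (\<forall>r s x. smul (r * s) x = smul r (smul s x))"

definition null_module :: "('r::ring \<Rightarrow> 'n::ab_group_add \<Rightarrow> 'n) \<Rightarrow> bool" where
  "null_module smul \<longleftrightarrow> (\<forall>r x. smul r x = 0)"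

(* Tensor product M \<otimes> N: free abelian group on M \<times> N modulo the subgroup
   generated by biadditivity and balancing relations *)
inductive_set tensor_rel ::
  "'m::ab_group_add set \<Rightarrow> 'n::ab_group_add set \<Rightarrow> ('m \<Rightarrow> 's \<Rightarrow> 'm) \<Rightarrow> ('s \<Rightarrow> 'n \<Rightarrow> 'n)
   \<Rightarrow> ('m \<times> 'n \<Rightarrow>\<^sub>0 int) set"
  for M N ract lact where
  rel_zero: "0 \<in> tensor_rel M N ract lact"
| rel_add: "x \<in> tensor_rel M N ract lact \<Longrightarrow> y \<in> tensor_rel M N ract lact
            \<Longrightarrow> x + y \<in> tensor_rel M N ract lact"
| rel_neg: "x \<in> tensor_rel M N ract lact \<Longrightarrow> - x \<in> tensor_rel M N ract lact"
| rel_ladd: "m \<in> M \<Longrightarrow> m' \<in> M \<Longrightarrow> n \<in> N \<Longrightarrow>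
     Poly_Mapping.single (m + m', n) 1 - Poly_Mapping.single (m, n) 1
       - Poly_Mapping.single (m', n) 1 \<in> tensor_rel M N ract lact"
| rel_radd: "m \<in> M \<Longrightarrow> n \<in> N \<Longrightarrow> n' \<in> N \<Longrightarrow>
     Poly_Mapping.single (m, n + n') 1 - Poly_Mapping.single (m, n) 1
       - Poly_Mapping.single (m, n') 1 \<in> tensor_rel M N ract lact"
| rel_bal: "m \<in> M \<Longrightarrow> n \<in> N \<Longrightarrow>
     Poly_Mapping.single (ract m s, n) 1 - Poly_Mapping.single (m, lact s n) 1
       \<in> tensor_rel M N ract lact"

(* M \<otimes> N = 0 : every element of the free group on M \<times> N is a relation *)
definition tensor_is_zero ::
  "'m::ab_group_add set \<Rightarrow> 'n::ab_group_add set \<Rightarrow> ('m \<Rightarrow> 's \<Rightarrow> 'm) \<Rightarrow> ('s \<Rightarrow> 'n \<Rightarrow> 'n) \<Rightarrow> bool"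
  where "tensor_is_zero M N ract lact \<longleftrightarrow>
           (\<forall>x. Poly_Mapping.keys x \<subseteq> M \<times> N \<longrightarrow> x \<in> tensor_rel M N ract lact)"

(* multiplication map R \<otimes>_R R \<rightarrow> R on the free group *)
definition mult_map :: "('r::ring \<times> 'r \<Rightarrow>\<^sub>0 int) \<Rightarrow> 'r" where
  "mult_map x = (\<Sum>z\<in>Poly_Mapping.keys x. zsmul (Poly_Mapping.lookup x z) (fst z * snd z))"

definition t_unital :: "'r::ring itself \<Rightarrow> bool" where
  "t_unital _ \<longleftrightarrow>
     (\<forall>r::'r. \<exists>x. mult_map x = r) \<and>
     (\<forall>x::('r \<times> 'r \<Rightarrow>\<^sub>0 int). mult_map x = 0 \<longrightarrow>
          x \<in> tensor_rel UNIV UNIV (*) (*))"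

definition is_hom ::
  "'p::ab_group_add set \<Rightarrow> 'n::ab_group_add set \<Rightarrow> ('s \<Rightarrow> 'p \<Rightarrow> 'p) \<Rightarrow> ('s \<Rightarrow> 'n \<Rightarrow> 'n)
   \<Rightarrow> ('p \<Rightarrow> 'n) \<Rightarrow> bool" where
  "is_hom P N lactP lactN f \<longleftrightarrow>
     (\<forall>p\<in>P. f p \<in> N) \<and> (\<forall>p\<in>P. \<forall>q\<in>P. f (p + q) = f p + f q) \<and>
     (\<forall>s. \<forall>p\<in>P. f (lactP s p) = lactN s (f p))"

definition free_car :: "'x set \<Rightarrow> ('x \<Rightarrow>\<^sub>0 'r::ring unitz) set" where
  "free_car X = {f. Poly_Mapping.keys f \<subseteq> X}"

definition free_ract :: "('x \<Rightarrow>\<^sub>0 'r::ring unitz) \<Rightarrow> 'r unitz \<Rightarrow> ('x \<Rightarrow>\<^sub>0 'r unitz)" where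
  "free_ract f s = Poly_Mapping.map (\<lambda>c. umult c s) f"

definition free_lact :: "'r::ring unitz \<Rightarrow> ('x \<Rightarrow>\<^sub>0 'r unitz) \<Rightarrow> ('x \<Rightarrow>\<^sub>0 'r unitz)" where
  "free_lact s f = Poly_Mapping.map (\<lambda>c. umult s c) f"

(* the map from the free module on X \<subseteq> M to M, sending basis element x to x *)
definition aug_r :: "('x::ab_group_add \<Rightarrow> 's \<Rightarrow> 'x) \<Rightarrow> ('x \<Rightarrow>\<^sub>0 's::zero) \<Rightarrow> 'x" where
  "aug_r act f = (\<Sum>x\<in>Poly_Mapping.keys f. act x (Poly_Mapping.lookup f x))"

definition aug_l :: "('s \<Rightarrow> 'x::ab_group_add \<Rightarrow> 'x) \<Rightarrow> ('x \<Rightarrow>\<^sub>0 's::zero) \<Rightarrow> 'x" where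
  "aug_l act f = (\<Sum>x\<in>Poly_Mapping.keys f. act (Poly_Mapping.lookup f x) x)"

definition push :: "('a \<Rightarrow> 'b) \<Rightarrow> ('a \<Rightarrow>\<^sub>0 int) \<Rightarrow> ('b \<Rightarrow>\<^sub>0 int)" where
  "push h x = (\<Sum>z\<in>Poly_Mapping.keys x. Poly_Mapping.single (h z) (Poly_Mapping.lookup x z))"

(* Tor_1^{R~}(M,N) = H_1(P_\<bullet> \<otimes>_{R~} N) for the canonical free resolution
   ... \<rightarrow> P2 \<rightarrow> P1 \<rightarrow> P0 \<rightarrow> M \<rightarrow> 0 of the right R~-module M
   (P0 free on M, P1 free on K0 = ker(P0\<rightarrow>M), P2 free on K1 = ker(P1\<rightarrow>P0)). *)
definition Tor1_vanishes ::
  "'m::ab_group_add set \<Rightarrow> ('m \<Rightarrow> 'r::ring unitz \<Rightarrow> 'm) \<Rightarrow> 'n::ab_group_add set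
   \<Rightarrow> ('r unitz \<Rightarrow> 'n \<Rightarrow> 'n) \<Rightarrow> bool" where
  "Tor1_vanishes M act N lact \<longleftrightarrow>
    (let P0 = free_car M;
         K0 = {f\<in>P0. aug_r act f = 0};
         P1 = free_car K0;
         K1 = {g\<in>P1. aug_r free_ract g = 0};
         P2 = free_car K1
     in \<forall>x. Poly_Mapping.keys x \<subseteq> P1 \<times> N \<and>
            push (\<lambda>(p, n). (aug_r free_ract p, n)) x \<in> tensor_rel P0 N free_ract lact
          \<longrightarrow> (\<exists>y. Poly_Mapping.keys y \<subseteq> P2 \<times> N \<and>
                 push (\<lambda>(q, n). (aug_r free_ract q, n)) y - x \<in> tensor_rel P1 N free_ract lact))"

(* Ext^1_{R~}(M,N) = H^1(Hom_{R~}(P_\<bullet>, N)) for the canonical free resolution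
   P2 \<rightarrow> P1 \<rightarrow> P0 \<rightarrow> M \<rightarrow> 0 of the left R~-module M. *)
definition Ext1_vanishes ::
  "'m::ab_group_add set \<Rightarrow> ('r::ring unitz \<Rightarrow> 'm \<Rightarrow> 'm) \<Rightarrow> 'n::ab_group_add set
   \<Rightarrow> ('r unitz \<Rightarrow> 'n \<Rightarrow> 'n) \<Rightarrow> bool" where
  "Ext1_vanishes M act N lact \<longleftrightarrow>
    (let P0 = free_car M;
         K0 = {f\<in>P0. aug_l act f = 0};
         P1 = free_car K0;
         K1 = {g\<in>P1. aug_l free_lact g = 0};
         P2 = free_car K1
     in \<forall>\<phi>. is_hom P1 N free_lact lact \<phi> \<and> (\<forall>q\<in>P2. \<phi> (aug_l free_lact q) = 0)
          \<longrightarrow> (\<exists>\<psi>. is_hom P0 N free_lact lact \<psi> \<and>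
                 (\<forall>p\<in>P1. \<phi> p = \<psi> (aug_l free_lact p))))"

end

(*
  Since N is null, R~ acts on N through the augmentation R~ -> Z, and t-unitality is used in two
  forms: every element of R is a sum of products, and every relation among products comes from the
  tensor relations of R (x)_R R.  The first form already gives the degree-0 statements, because
  a b (x) n = a (x) b n = 0 and f (a b) = a f (b) = 0.

  For Tor_1 and Ext^1 let K0 be the kernel of the augmentation P0 -> R, P0 the free module on R.
  By the first form every generator e_a of P0 lifts to an element of K0 with integer part e_a; by
  the second, the elements of K0 with zero integer part lie in the subgroup generated by R K0.
  A map on K0 that is, modulo some subgroup S, additive and linear for the action through the
  augmentation therefore kills R K0 modulo S and is determined by its values on the lifts.  For an
  Ext cocycle on P1 this yields its preimage on P0; for q |-> q (x) n modulo boundaries it yields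
  a map P0 (x) N -> P1 (x) N splitting d1 (x) N, so that every cycle is a boundary.  Right modules
  are handled as left modules over the opposite ring.
*)

theory Submission
  imports Defs "HOL.Modules"
begin

lemma sum_lessThan_const_add:
  fixes m n :: nat
  shows "(\<Sum>i<m + n. x) = (\<Sum>i<m. x) + (\<Sum>i<n. x :: 'a::ab_group_add)"
  by (induction n) (simp_all add: add.assoc)

lemma zsmul_diff_of_nat: "zsmul (int m - int n) x = (\<Sum>i<m. x) - (\<Sum>i<n. x)"
proof (cases "n \<le> m")
  case True
  then obtain d where "m = n + d" using le_Suc_ex by blast
  then show ?thesis by (simp add: zsmul_def sum_lessThan_const_add)
next
  case False
  then obtain d where "n = m + d" using le_Suc_ex[of m n] by auto
  then show ?thesis by (simp add: zsmul_def sum_lessThan_const_add)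
qed

lemma zsmul_of_nat: "zsmul (int m) x = (\<Sum>i<m. x)"
  by (simp add: zsmul_def)

lemma zsmul_add: "zsmul (a + b) x = zsmul a x + zsmul b x"
proof -
  obtain m n p q where "a = int m - int n" "b = int p - int q"
    by (metis int_diff_cases)
  moreover have "int m - int n + (int p - int q) = int (m + p) - int (n + q)"
    by simp
  ultimately show ?thesis
    by (simp only: zsmul_diff_of_nat sum_lessThan_const_add) (simp add: algebra_simps)
qed

lemma zsmul_add_right: "zsmul k (x + y) = zsmul k x + zsmul k y"
  by (simp add: zsmul_def sum.distrib algebra_simps)

lemma zsmul_zsmul: "zsmul a (zsmul b x) = zsmul (a * b) x"
proof -
  have diff: "zsmul (c - d) y = zsmul c y - zsmul d y" for c d and y :: 'a
    using zsmul_add[of "c - d" d y] by (simp add: algebra_simps)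
  have nat: "zsmul (int m * b) x = (\<Sum>i<m. zsmul b x)" for m
    by (induction m) (simp_all add: algebra_simps zsmul_add, simp add: zsmul_def)
  obtain m n where "a = int m - int n" by (metis int_diff_cases)
  then show ?thesis
    by (simp only: left_diff_distrib diff nat zsmul_of_nat)
qed

(* Integer multiples make every abelian group a Z-module whose subspaces are its subgroups. *)
interpretation zsmul: module zsmul
  by standard (simp_all add: zsmul_add zsmul_add_right zsmul_zsmul, simp add: zsmul_def)

lemma zsmul_int [simp]: "zsmul k (c :: int) = k * c"
proof -
  have "zsmul c (1::int) = c" for c
    by (simp add: zsmul_def)
  then show ?thesis
    by (metis zsmul.scale_scale)
qed

lemma additive_zsmul: "additive f \<Longrightarrow> f (zsmul k x) = zsmul k (f x)"
  by (simp add: zsmul_def additive.diff additive.sum)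

lemma additive_zsmul_right: "additive (zsmul k)"
  by unfold_locales (rule zsmul.scale_right_distrib)

lemma zsmul_subspaceI:
  assumes "0 \<in> S" and add: "\<And>x y. x \<in> S \<Longrightarrow> y \<in> S \<Longrightarrow> x + y \<in> S"
    and minus: "\<And>x. x \<in> S \<Longrightarrow> - x \<in> S"
  shows "zsmul.subspace S"
proof (rule zsmul.subspaceI)
  fix c x assume "x \<in> S"
  then have "(\<Sum>i<m. x) \<in> S" for m :: nat
    by (induction m) (simp_all add: assms)
  then show "zsmul c x \<in> S"
    unfolding zsmul_def diff_conv_add_uminus by (intro add minus)
qed (use assms in auto)

lemma (in module) subspace_diff_trans: "subspace S \<Longrightarrow> a - b \<in> S \<Longrightarrow> b - c \<in> S \<Longrightarrow> a - c \<in> S"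
  using subspace_add[of S "a - b" "b - c"] by simp

lemma lookup_zsmul [simp]:
  fixes p :: "'a \<Rightarrow>\<^sub>0 int"
  shows "Poly_Mapping.lookup (zsmul k p) x = k * Poly_Mapping.lookup p x"
proof -
  have "additive (\<lambda>p :: 'a \<Rightarrow>\<^sub>0 int. Poly_Mapping.lookup p x)"
    by unfold_locales (simp add: lookup_add)
  from additive_zsmul[OF this] show ?thesis
    by simp
qed

lemma zsmul_eq_frag_cmul: "zsmul k x = frag_cmul k x"
  by (rule poly_mapping_eqI) simp

lemma zsmul_frag_of: "zsmul k (frag_of x) = Poly_Mapping.single x k"
  by (rule poly_mapping_eqI) (simp add: lookup_single when_def)

definition frag_lift :: "('a \<Rightarrow> 'g::ab_group_add) \<Rightarrow> ('a \<Rightarrow>\<^sub>0 int) \<Rightarrow> 'g" where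
  "frag_lift h x = (\<Sum>z\<in>Poly_Mapping.keys x. zsmul (Poly_Mapping.lookup x z) (h z))"

lemma frag_lift_superset:
  assumes "finite S" "Poly_Mapping.keys x \<subseteq> S"
  shows "frag_lift h x = (\<Sum>z\<in>S. zsmul (Poly_Mapping.lookup x z) (h z))"
  unfolding frag_lift_def
  by (rule sum.mono_neutral_left) (use assms in \<open>auto simp: in_keys_iff\<close>)

lemma additive_frag_lift: "additive (frag_lift h)"
proof
  fix x y :: "'a \<Rightarrow>\<^sub>0 int"
  let ?S = "Poly_Mapping.keys x \<union> Poly_Mapping.keys y"
  have "frag_lift h (x + y) = (\<Sum>z\<in>?S. zsmul (Poly_Mapping.lookup (x + y) z) (h z))"
    by (rule frag_lift_superset) (simp_all add: keys_add)
  also have "\<dots> = frag_lift h x + frag_lift h y"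
    using frag_lift_superset[of ?S x h] frag_lift_superset[of ?S y h]
    by (simp add: lookup_add zsmul.scale_left_distrib sum.distrib)
  finally show "frag_lift h (x + y) = frag_lift h x + frag_lift h y" .
qed

lemmas frag_lift_add = additive.add[OF additive_frag_lift]
  and frag_lift_0 [simp] = additive.zero[OF additive_frag_lift]
  and frag_lift_diff = additive.diff[OF additive_frag_lift]
  and frag_lift_minus = additive.minus[OF additive_frag_lift]
  and frag_lift_sum = additive.sum[OF additive_frag_lift]

lemma frag_lift_single [simp]: "frag_lift h (Poly_Mapping.single z c) = zsmul c (h z)"
  by (cases "c = 0") (simp_all add: frag_lift_def)

lemma frag_lift_cong:
  "(\<And>z. z \<in> Poly_Mapping.keys x \<Longrightarrow> h z = h' z) \<Longrightarrow> frag_lift h x = frag_lift h' x"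
  by (simp add: frag_lift_def)

lemma frag_lift_hom: "additive f \<Longrightarrow> f (frag_lift h x) = frag_lift (\<lambda>z. f (h z)) x"
  by (simp add: frag_lift_def additive.sum additive_zsmul)

lemma frag_lift_fun_add: "frag_lift (\<lambda>z. h z + h' z) x = frag_lift h x + frag_lift h' x"
  by (simp add: frag_lift_def zsmul.scale_right_distrib sum.distrib)

lemma frag_lift_fun_diff: "frag_lift (\<lambda>z. h z - h' z) x = frag_lift h x - frag_lift h' x"
  by (simp add: frag_lift_def zsmul.scale_right_diff_distrib sum_subtractf)

lemma frag_lift_fun_zsmul: "frag_lift (\<lambda>z. zsmul k (h z)) x = zsmul k (frag_lift h x)"
  by (simp add: frag_lift_hom[OF additive_zsmul_right])

lemma frag_lift_eq_frag_extend: "frag_lift h x = frag_extend h x"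
  by (simp add: frag_lift_def frag_extend_def zsmul_eq_frag_cmul)

lemma frag_lift_frag_of: "frag_lift frag_of x = x"
  by (metis frag_lift_eq_frag_extend frag_expansion)

lemma push_eq_frag_lift: "push g x = frag_lift (\<lambda>z. frag_of (g z)) x"
  by (simp add: push_def frag_lift_def zsmul_frag_of)

lemma additive_push: "additive (push g)"
  unfolding push_eq_frag_lift[abs_def] by (rule additive_frag_lift)

lemma frag_lift_push: "frag_lift h (push g x) = frag_lift (\<lambda>z. h (g z)) x"
  by (simp add: push_eq_frag_lift frag_lift_hom[OF additive_frag_lift])

lemma mult_map_eq_frag_lift: "mult_map x = frag_lift (\<lambda>(a, b). a * b) x"
  by (simp add: mult_map_def frag_lift_def split_beta)

lemma frag_lift_in_subspace:
  "zsmul.subspace S \<Longrightarrow> (\<And>z. z \<in> Poly_Mapping.keys x \<Longrightarrow> h z \<in> S) \<Longrightarrow> frag_lift h x \<in> S"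
  unfolding frag_lift_def by (intro zsmul.subspace_sum zsmul.subspace_scale) auto

lemma poly_mapping_sum_single:
  fixes f :: "'a \<Rightarrow>\<^sub>0 'b::comm_monoid_add"
  shows "(\<Sum>x\<in>Poly_Mapping.keys f. Poly_Mapping.single x (Poly_Mapping.lookup f x)) = f"
  by (rule poly_mapping_eqI)
    (auto simp: lookup_sum lookup_single when_def in_keys_iff sum.delta_remove)

lemma poly_mapping_induct_keys [consumes 1, case_names zero single add]:
  fixes f :: "'a \<Rightarrow>\<^sub>0 'b::comm_monoid_add"
  assumes "Poly_Mapping.keys f \<subseteq> K"
    and "P 0"
    and single: "\<And>x c. x \<in> K \<Longrightarrow> P (Poly_Mapping.single x c)"
    and add: "\<And>g h. Poly_Mapping.keys g \<subseteq> K \<Longrightarrow> Poly_Mapping.keys h \<subseteq> K \<Longrightarrow> P g \<Longrightarrow> P h \<Longrightarrow> P (g + h)"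
  shows "P f"
proof -
  have "Poly_Mapping.keys (\<Sum>x\<in>A. Poly_Mapping.single x (Poly_Mapping.lookup f x)) \<subseteq> K
      \<and> P (\<Sum>x\<in>A. Poly_Mapping.single x (Poly_Mapping.lookup f x))" if "A \<subseteq> Poly_Mapping.keys f" for A
    using finite_subset[OF that finite_keys] that
  proof (induction A rule: finite_induct)
    case (insert x A)
    let ?s = "\<Sum>x\<in>A. Poly_Mapping.single x (Poly_Mapping.lookup f x)"
    have "x \<in> K"
      using insert.prems assms(1) by auto
    moreover have "Poly_Mapping.keys (Poly_Mapping.single x (Poly_Mapping.lookup f x) + ?s) \<subseteq> K"
      by (rule order_trans[OF keys_add]) (use insert \<open>x \<in> K\<close> in auto)
    ultimately show ?case
      using insert by (simp add: add single)
  qed (simp add: assms(2))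
  then show ?thesis
    by (metis order_refl poly_mapping_sum_single)
qed

section \<open>Maps that are additive modulo a subgroup\<close>

locale additive_mod =
  fixes K :: "'a::ab_group_add set" and S :: "'b::ab_group_add set" and u :: "'a \<Rightarrow> 'b"
  assumes subspace_dom: "zsmul.subspace K"
    and subspace_mod: "zsmul.subspace S"
    and add_mod: "x \<in> K \<Longrightarrow> y \<in> K \<Longrightarrow> u (x + y) - (u x + u y) \<in> S"
begin

lemma zero: "u 0 \<in> S"
  using zsmul.subspace_neg[OF subspace_mod add_mod[of 0 0]] zsmul.subspace_0[OF subspace_dom]
  by simp

lemma minus: "x \<in> K \<Longrightarrow> u (- x) - - u x \<in> S"
  using zsmul.subspace_diff[OF subspace_mod zero add_mod[of x "- x"]]
    zsmul.subspace_neg[OF subspace_dom]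
  by (simp add: algebra_simps)

lemma diff: "x \<in> K \<Longrightarrow> y \<in> K \<Longrightarrow> u (x - y) - (u x - u y) \<in> S"
  using zsmul.subspace_add[OF subspace_mod add_mod[of x "- y"] minus[of y]]
    zsmul.subspace_neg[OF subspace_dom]
  by (simp add: algebra_simps)

lemma zsmul: assumes "x \<in> K" shows "u (zsmul k x) - zsmul k (u x) \<in> S"
proof -
  have of_nat: "u (zsmul (int m) x) - zsmul (int m) (u x) \<in> S" for m
  proof (induction m)
    case (Suc m)
    have "zsmul (int m) x \<in> K"
      using zsmul.subspace_scale[OF subspace_dom assms] .
    from zsmul.subspace_add[OF subspace_mod add_mod[OF this assms] Suc]
    show ?case
      by (simp add: algebra_simps)
  qed (simp add: zero)
  show ?thesis
  proof (cases k rule: int_cases2)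
    case (nonpos m)
    have "zsmul (int m) x \<in> K"
      using zsmul.subspace_scale[OF subspace_dom assms] .
    from zsmul.subspace_diff[OF subspace_mod minus[OF this] of_nat[of m]] nonpos
    show ?thesis
      by (simp add: algebra_simps)
  qed (simp add: of_nat)
qed

lemma frag_lift:
  assumes "\<And>z. z \<in> Poly_Mapping.keys x \<Longrightarrow> h z \<in> K"
  shows "u (frag_lift h x) - frag_lift (\<lambda>z. u (h z)) x \<in> S"
proof -
  have "Poly_Mapping.keys x \<subseteq> {z. h z \<in> K}"
    using assms by blast
  moreover note u0 = zero and u_diff = diff
  ultimately have "frag_lift h x \<in> K \<and> u (frag_lift h x) - frag_lift (\<lambda>z. u (h z)) x \<in> S"
  proof (induction x rule: frag_induction)
    case zero
    show ?case
      by (simp add: u0 zsmul.subspace_0[OF subspace_dom])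
  next
    case (one z)
    then show ?case
      by (simp add: zsmul.subspace_0[OF subspace_mod])
  next
    case (diff a b)
    let ?a = "frag_lift h a" and ?b = "frag_lift h b"
    let ?va = "frag_lift (\<lambda>z. u (h z)) a" and ?vb = "frag_lift (\<lambda>z. u (h z)) b"
    from diff have "?a \<in> K" "?b \<in> K" "u ?a - ?va \<in> S" "u ?b - ?vb \<in> S"
      by auto
    from zsmul.subspace_add[OF subspace_mod u_diff[OF this(1,2)]
        zsmul.subspace_diff[OF subspace_mod this(3,4)]]
    show ?case
      using diff by (auto simp: frag_lift_diff algebra_simps intro: zsmul.subspace_diff[OF subspace_dom])
  qed
  then show ?thesis ..
qed

lemma subspace_vanishing: "zsmul.subspace {x. x \<in> K \<and> u x \<in> S}"
proof (rule zsmul_subspaceI)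
  fix x y assume x: "x \<in> {x. x \<in> K \<and> u x \<in> S}" and y: "y \<in> {x. x \<in> K \<and> u x \<in> S}"
  then have "u (x + y) - (u x + u y) + (u x + u y) \<in> S"
    by (intro zsmul.subspace_add[OF subspace_mod] add_mod) auto
  with x y show "x + y \<in> {x. x \<in> K \<and> u x \<in> S}"
    by (auto intro: zsmul.subspace_add[OF subspace_dom])
next
  fix x assume x: "x \<in> {x. x \<in> K \<and> u x \<in> S}"
  then have "u (- x) - - u x - u x \<in> S"
    using zsmul.subspace_diff[OF subspace_mod minus] by blast
  with x show "- x \<in> {x. x \<in> K \<and> u x \<in> S}"
    by (auto intro: zsmul.subspace_neg[OF subspace_dom])
qed (simp add: zero zsmul.subspace_0[OF subspace_dom])

lemma vanishes_on_span:
  assumes "G \<subseteq> K" and "\<And>g. g \<in> G \<Longrightarrow> u g \<in> S" and "x \<in> zsmul.span G"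
  shows "u x \<in> S"
  using zsmul.span_induct[OF assms(3) subspace_vanishing] assms(1,2) by blast

end

lemma additive_mod_mono:
  "additive_mod K S u \<Longrightarrow> S \<subseteq> S' \<Longrightarrow> zsmul.subspace S' \<Longrightarrow> additive_mod K S' u"
  unfolding additive_mod_def by blast

lemma is_hom_additive_mod:
  "is_hom P N l l' \<phi> \<Longrightarrow> zsmul.subspace P \<Longrightarrow> additive_mod P {0} \<phi>"
  by unfold_locales (simp_all add: is_hom_def)

lemma subspace_tensor_rel: "zsmul.subspace (tensor_rel M N r l)"
  by (rule zsmul_subspaceI) (auto intro: tensor_rel.intros)

lemma additive_mod_tensor_left:
  assumes "zsmul.subspace M" "n \<in> N"
  shows "additive_mod M (tensor_rel M N r l) (\<lambda>m. frag_of (m, n))"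
proof
  fix x y assume "x \<in> M" "y \<in> M"
  from tensor_rel.rel_ladd[OF this assms(2)]
  show "frag_of (x + y, n) - (frag_of (x, n) + frag_of (y, n)) \<in> tensor_rel M N r l"
    by (simp add: diff_diff_eq)
qed (simp_all add: assms subspace_tensor_rel)

lemma additive_mod_tensor_right:
  assumes "zsmul.subspace N" "m \<in> M"
  shows "additive_mod N (tensor_rel M N r l) (\<lambda>n. frag_of (m, n))"
proof
  fix x y assume "x \<in> N" "y \<in> N"
  from tensor_rel.rel_radd[OF assms(2) this]
  show "frag_of (m, x + y) - (frag_of (m, x) + frag_of (m, y)) \<in> tensor_rel M N r l"
    by (simp add: diff_diff_eq)
qed (simp_all add: assms subspace_tensor_rel)

lemma tensor_rel_universal:
  fixes \<Lambda> :: "'m::ab_group_add \<times> 'n::ab_group_add \<Rightarrow> 'g::ab_group_add"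
  assumes S: "zsmul.subspace S"
    and left: "\<And>m m' n. m \<in> M \<Longrightarrow> m' \<in> M \<Longrightarrow> n \<in> N \<Longrightarrow> \<Lambda> (m + m', n) - \<Lambda> (m, n) - \<Lambda> (m', n) \<in> S"
    and right: "\<And>m n n'. m \<in> M \<Longrightarrow> n \<in> N \<Longrightarrow> n' \<in> N \<Longrightarrow> \<Lambda> (m, n + n') - \<Lambda> (m, n) - \<Lambda> (m, n') \<in> S"
    and balanced: "\<And>m n s. m \<in> M \<Longrightarrow> n \<in> N \<Longrightarrow> \<Lambda> (r m s, n) - \<Lambda> (m, l s n) \<in> S"
    and "x \<in> tensor_rel M N r l"
  shows "frag_lift \<Lambda> x \<in> S"
  using assms(5)
  by induction (simp_all add: assms frag_lift_add frag_lift_diff frag_lift_minus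
      zsmul.subspace_0 zsmul.subspace_add zsmul.subspace_neg)

lemma tensor_rel_swap:
  fixes x :: "('r::ring \<times> 'r) \<Rightarrow>\<^sub>0 int"
  assumes "x \<in> tensor_rel M N (*) (*)"
  shows "push prod.swap x \<in> tensor_rel N M (\<lambda>a b. b * a) (\<lambda>a b. b * a)"
  unfolding push_eq_frag_lift
proof (rule tensor_rel_universal[OF subspace_tensor_rel _ _ _ assms], goal_cases)
  case (3 m n s)
  then show ?case
    using tensor_rel.rel_bal[of n N m M "\<lambda>a b. b * a" s "\<lambda>a b. b * a"]
      zsmul.subspace_neg[OF subspace_tensor_rel]
    by fastforce
qed (auto intro: tensor_rel.intros)

lemma subspace_push_preimage:
  assumes T: "zsmul.subspace T"
  shows "zsmul.subspace {x. \<exists>y. Poly_Mapping.keys y \<subseteq> Q \<and> push g y - x \<in> T}"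
proof (rule zsmul_subspaceI)
  show "0 \<in> {x. \<exists>y. Poly_Mapping.keys y \<subseteq> Q \<and> push g y - x \<in> T}"
    by (intro CollectI exI[of _ 0]) (simp add: additive.zero[OF additive_push] zsmul.subspace_0[OF T])
next
  fix x x' assume "x \<in> {x. \<exists>y. Poly_Mapping.keys y \<subseteq> Q \<and> push g y - x \<in> T}"
    and "x' \<in> {x. \<exists>y. Poly_Mapping.keys y \<subseteq> Q \<and> push g y - x \<in> T}"
  then obtain y y' where y: "Poly_Mapping.keys y \<subseteq> Q" "push g y - x \<in> T"
    and y': "Poly_Mapping.keys y' \<subseteq> Q" "push g y' - x' \<in> T"
    by blast
  have eq: "push g (y + y') - (x + x') = (push g y - x) + (push g y' - x')"
    by (simp add: additive.add[OF additive_push])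
  have "push g (y + y') - (x + x') \<in> T"
    unfolding eq by (rule zsmul.subspace_add[OF T y(2) y'(2)])
  moreover have "Poly_Mapping.keys (y + y') \<subseteq> Q"
    using keys_add[of y y'] y(1) y'(1) by blast
  ultimately show "x + x' \<in> {x. \<exists>y. Poly_Mapping.keys y \<subseteq> Q \<and> push g y - x \<in> T}"
    by blast
next
  fix x assume "x \<in> {x. \<exists>y. Poly_Mapping.keys y \<subseteq> Q \<and> push g y - x \<in> T}"
  then obtain y where y: "Poly_Mapping.keys y \<subseteq> Q" "push g y - x \<in> T"
    by blast
  have eq: "push g (- y) - - x = - (push g y - x)"
    by (simp add: additive.minus[OF additive_push])
  have "push g (- y) - - x \<in> T"
    unfolding eq by (rule zsmul.subspace_neg[OF T y(2)])
  moreover have "Poly_Mapping.keys (- y) \<subseteq> Q"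
    using y(1) by (simp only: keys_minus)
  ultimately show "- x \<in> {x. \<exists>y. Poly_Mapping.keys y \<subseteq> Q \<and> push g y - x \<in> T}"
    by (intro CollectI exI[of _ "- y"] conjI)
qed

section \<open>Free modules over the unitalization\<close>

definition int_part :: "('x \<Rightarrow>\<^sub>0 'r::zero unitz) \<Rightarrow> ('x \<Rightarrow>\<^sub>0 int)" where
  "int_part f = Poly_Mapping.map fst f"

definition free_gen :: "'x \<Rightarrow> ('x \<Rightarrow>\<^sub>0 'r::zero unitz)" where
  "free_gen x = Poly_Mapping.single x (1, 0)"

definition aug_smul :: "'r unitz \<Rightarrow> 'n::ab_group_add \<Rightarrow> 'n" where
  "aug_smul s x = zsmul (fst s) x"

lemma lookup_int_part [simp]: "Poly_Mapping.lookup (int_part f) x = fst (Poly_Mapping.lookup f x)"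
  by (simp add: int_part_def Poly_Mapping.map.rep_eq when_def zero_prod_def)

lemma keys_int_part: "Poly_Mapping.keys (int_part f) \<subseteq> Poly_Mapping.keys f"
  by (auto simp: in_keys_iff zero_prod_def)

lemma additive_int_part: "additive (int_part :: ('x \<Rightarrow>\<^sub>0 'r::ab_group_add unitz) \<Rightarrow> _)"
  by unfold_locales (simp add: poly_mapping_eqI lookup_add)

lemmas int_part_0 [simp] = additive.zero[OF additive_int_part]
  and int_part_add = additive.add[OF additive_int_part]
  and int_part_diff = additive.diff[OF additive_int_part]

lemma int_part_single [simp]: "int_part (Poly_Mapping.single x c) = Poly_Mapping.single x (fst c)"
  by (rule poly_mapping_eqI) (simp add: lookup_single when_def zero_prod_def)

lemma int_part_free_gen [simp]: "int_part (free_gen x) = frag_of x"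
  by (simp add: free_gen_def)

lemma subspace_free_car: "zsmul.subspace (free_car K)"
  by (rule zsmul_subspaceI) (auto simp: free_car_def dest: subsetD[OF keys_add])

lemma free_car_UNIV [simp]: "free_car UNIV = UNIV"
  by (simp add: free_car_def)

lemma free_gen_in_free_car [simp]: "free_gen x \<in> free_car K \<longleftrightarrow> x \<in> K"
  by (simp add: free_gen_def free_car_def zero_prod_def)

lemma single_in_free_car: "x \<in> K \<Longrightarrow> Poly_Mapping.single x c \<in> free_car K"
  by (simp add: free_car_def)

lemma additive_aug_l:
  fixes act :: "'s::ab_group_add \<Rightarrow> 'x::ab_group_add \<Rightarrow> 'x"
  assumes "\<And>x. additive (\<lambda>s. act s x)"
  shows "additive (aug_l act)"
proof
  fix f g :: "'x \<Rightarrow>\<^sub>0 's"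
  let ?S = "Poly_Mapping.keys f \<union> Poly_Mapping.keys g"
  have sum: "aug_l act h = (\<Sum>x\<in>?S. act (Poly_Mapping.lookup h x) x)"
    if "Poly_Mapping.keys h \<subseteq> ?S" for h
    unfolding aug_l_def
    by (rule sum.mono_neutral_left) (use that additive.zero[OF assms] in \<open>auto simp: in_keys_iff\<close>)
  show "aug_l act (f + g) = aug_l act f + aug_l act g"
    using keys_add[of f g]
    by (simp add: sum lookup_add additive.add[OF assms] sum.distrib)
qed

lemma aug_l_single:
  fixes act :: "'s::ab_group_add \<Rightarrow> 'x::ab_group_add \<Rightarrow> 'x"
  assumes "\<And>x. additive (\<lambda>s. act s x)"
  shows "aug_l act (Poly_Mapping.single x c) = act c x"
  by (cases "c = 0") (simp_all add: aug_l_def additive.zero[OF assms])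

lemma additive_mod_eq_frag_lift:
  assumes "additive_mod (free_car K) S \<Phi>"
    and single: "\<And>k s. k \<in> K \<Longrightarrow> \<Phi> (Poly_Mapping.single k s) - zsmul (fst s) (\<Phi> (free_gen k)) \<in> S"
    and "p \<in> free_car K"
  shows "\<Phi> p - frag_lift (\<lambda>k. \<Phi> (free_gen k)) (int_part p) \<in> S"
proof -
  interpret \<Phi>: additive_mod "free_car K" S \<Phi>
    by fact
  from assms(3) have "Poly_Mapping.keys p \<subseteq> K"
    by (simp add: free_car_def)
  then show ?thesis
  proof (induction p rule: poly_mapping_induct_keys)
    case zero
    show ?case
      by (simp add: \<Phi>.zero)
  next
    case (single k c)
    then show ?case
      using assms(2) by simp
  next
    case (add g h)
    then have "\<Phi> (g + h) - (\<Phi> g + \<Phi> h) + (\<Phi> g - frag_lift (\<lambda>k. \<Phi> (free_gen k)) (int_part g))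
        + (\<Phi> h - frag_lift (\<lambda>k. \<Phi> (free_gen k)) (int_part h)) \<in> S"
      by (intro zsmul.subspace_add[OF \<Phi>.subspace_mod] \<Phi>.add_mod) (simp_all add: free_car_def)
    then show ?case
      by (simp add: int_part_add frag_lift_add algebra_simps)
  qed
qed

text \<open>\<open>R\<close> as a left module over the unitalization of \<open>(R, \<cdot>)\<close>, where \<open>\<cdot>\<close> is either the
  multiplication of \<open>R\<close> or the opposite one, which turns right \<open>R~\<close>-modules into left ones.\<close>

locale unitalization =
  fixes mult :: "'r::ring \<Rightarrow> 'r \<Rightarrow> 'r"  (infixl \<open>\<cdot>\<close> 70)
    and act :: "'r unitz \<Rightarrow> 'r \<Rightarrow> 'r"
    and umul :: "'r unitz \<Rightarrow> 'r unitz \<Rightarrow> 'r unitz"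
  assumes mult_assoc: "a \<cdot> b \<cdot> c = a \<cdot> (b \<cdot> c)"
    and mult_distrib_left: "a \<cdot> (b + c) = a \<cdot> b + a \<cdot> c"
    and mult_distrib_right: "(a + b) \<cdot> c = a \<cdot> c + b \<cdot> c"
    and act_def: "act s a = zsmul (fst s) a + snd s \<cdot> a"
    and umul_def: "umul s t =
      (fst s * fst t, zsmul (fst s) (snd t) + zsmul (fst t) (snd s) + snd s \<cdot> snd t)"
begin

lemma zsmul_mult_left: "zsmul k a \<cdot> b = zsmul k (a \<cdot> b)"
  by (rule additive_zsmul) (unfold_locales, rule mult_distrib_right)

lemma zsmul_mult_right: "a \<cdot> zsmul k b = zsmul k (a \<cdot> b)"
  by (rule additive_zsmul) (unfold_locales, rule mult_distrib_left)

lemma mult_0_left [simp]: "0 \<cdot> a = 0"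
  using zsmul_mult_left[of 0] by simp

lemma mult_0_right [simp]: "a \<cdot> 0 = 0"
  using zsmul_mult_right[of _ 0] by simp

lemma additive_act_left: "additive (\<lambda>s. act s a)"
  by unfold_locales (simp add: act_def mult_distrib_right algebra_simps)

lemma additive_act_right: "additive (act s)"
  by unfold_locales (simp add: act_def mult_distrib_left algebra_simps)

lemma act_umul: "act (umul s t) a = act s (act t a)"
  by (simp add: act_def umul_def mult_distrib_left mult_distrib_right mult_assoc zsmul_mult_left
      zsmul_mult_right algebra_simps)

lemma act_unit [simp]: "act (1, 0) a = a"
  by (simp add: act_def)

lemma act_pure: "act (0, b) a = b \<cdot> a"
  by (simp add: act_def)

lemma fst_umul [simp]: "fst (umul s t) = fst s * fst t"
  by (simp add: umul_def)

lemma umul_zero_right [simp]: "umul s 0 = 0"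
  by (simp add: umul_def zero_prod_def)

lemma umul_unit_right [simp]: "umul s (1, 0) = s"
  by (simp add: umul_def)

lemma umul_unit_left [simp]: "umul (1, 0) t = t"
  by (simp add: umul_def)

lemma umul_pure: "umul (0, a) (0, b) = (0, a \<cdot> b)"
  by (simp add: umul_def)

lemma umul_add_left: "umul (s + s') t = umul s t + umul s' t"
  by (simp add: umul_def mult_distrib_right algebra_simps)

lemma umul_add_right: "umul s (t + t') = umul s t + umul s t'"
  by (simp add: umul_def mult_distrib_left algebra_simps)

definition free_act :: "'r unitz \<Rightarrow> ('x \<Rightarrow>\<^sub>0 'r unitz) \<Rightarrow> ('x \<Rightarrow>\<^sub>0 'r unitz)" where
  "free_act s f = Poly_Mapping.map (umul s) f"

lemma lookup_free_act [simp]: "Poly_Mapping.lookup (free_act s f) x = umul s (Poly_Mapping.lookup f x)"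
  by (simp add: free_act_def Poly_Mapping.map.rep_eq when_def)

lemma free_act_single [simp]: "free_act s (Poly_Mapping.single x c) = Poly_Mapping.single x (umul s c)"
  by (simp add: free_act_def)

lemma free_act_unit [simp]: "free_act (1, 0) f = f"
  by (rule poly_mapping_eqI) simp

lemma free_act_free_gen: "free_act s (free_gen x) = Poly_Mapping.single x s"
  by (simp add: free_gen_def)

lemma additive_free_act_left: "additive (\<lambda>s. free_act s f)"
  by unfold_locales (simp add: poly_mapping_eqI lookup_add umul_add_left)

lemma additive_free_act_right: "additive (free_act s)"
  by unfold_locales (simp add: poly_mapping_eqI lookup_add umul_add_right)

lemma int_part_free_act: "int_part (free_act s f) = zsmul (fst s) (int_part f)"
  by (rule poly_mapping_eqI) simp

definition aug_ker :: "('r \<Rightarrow>\<^sub>0 'r unitz) set" where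
  "aug_ker = {f. aug_l act f = 0}"

lemmas additive_aug = additive_aug_l[OF additive_act_left]
  and aug_single = aug_l_single[OF additive_act_left]

lemma aug_free_act: "aug_l act (free_act s f) = act s (aug_l act f)"
proof -
  interpret aug: additive "aug_l act"
    by (rule additive_aug)
  have "aug_l act (free_act s f) =
      (\<Sum>x\<in>Poly_Mapping.keys f. aug_l act (free_act s (Poly_Mapping.single x (Poly_Mapping.lookup f x))))"
    by (subst (1) poly_mapping_sum_single[symmetric, of f])
      (simp add: additive.sum[OF additive_free_act_right] aug.sum)
  also have "\<dots> = (\<Sum>x\<in>Poly_Mapping.keys f. act s (act (Poly_Mapping.lookup f x) x))"
    by (simp add: aug_single act_umul)
  also have "\<dots> = act s (aug_l act f)"
    by (simp add: aug_l_def additive.sum[OF additive_act_right])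
  finally show ?thesis .
qed

lemma aug_free_gen [simp]: "aug_l act (free_gen x) = x"
  by (simp add: free_gen_def aug_single)

lemma subspace_aug_ker: "zsmul.subspace aug_ker"
  unfolding aug_ker_def
  by (rule zsmul_subspaceI) (simp_all add: additive.add[OF additive_aug] additive.zero[OF additive_aug]
      additive.minus[OF additive_aug])

lemma free_act_in_aug_ker: "f \<in> aug_ker \<Longrightarrow> free_act s f \<in> aug_ker"
  by (simp add: aug_ker_def aug_free_act additive.zero[OF additive_act_right])

lemmas additive_aug_free = additive_aug_l[OF additive_free_act_left]
  and aug_free_single = aug_l_single[OF additive_free_act_left]

lemma aug_free_free_gen [simp]: "aug_l free_act (free_gen k) = k"
  by (simp add: free_gen_def aug_free_single poly_mapping_eqI)

lemma int_part_aug_free: "int_part (aug_l free_act p) = frag_lift int_part (int_part p)"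
  by (simp add: aug_l_def additive.sum[OF additive_int_part] int_part_free_act
      frag_lift_superset[OF finite_keys keys_int_part])

lemma frag_lift_int_part_aug_free:
  "frag_lift h (int_part (aug_l free_act p)) = frag_lift (\<lambda>k. frag_lift h (int_part k)) (int_part p)"
  by (simp add: int_part_aug_free frag_lift_hom[OF additive_frag_lift])

end

section \<open>The kernel of the augmentation of a t-unital ring\<close>

locale t_unital_unitalization = unitalization mult act umul
  for mult :: "'r::ring \<Rightarrow> 'r \<Rightarrow> 'r"  (infixl \<open>\<cdot>\<close> 70) and act umul +
  assumes span_products: "zsmul.span {a \<cdot> b | a b. True} = UNIV"
    and products_kernel: "frag_lift (\<lambda>(a, b). a \<cdot> b) x = 0 \<Longrightarrow> x \<in> tensor_rel UNIV UNIV (\<cdot>) (\<cdot>)"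
begin

lemma in_subspace_if_products: "zsmul.subspace S \<Longrightarrow> (\<And>a b. a \<cdot> b \<in> S) \<Longrightarrow> r \<in> S"
  using zsmul.span_minimal[of "{a \<cdot> b | a b. True}" S] span_products by auto

lemma exists_ker_lift: "\<exists>k. k \<in> aug_ker \<and> int_part k = frag_of a"
proof -
  let ?S = "aug_l act ` {f. int_part f = 0}"
  have "zsmul.subspace ?S"
  proof (rule zsmul_subspaceI)
    show "0 \<in> ?S"
      by (rule image_eqI[of _ _ 0]) (simp_all add: additive.zero[OF additive_aug])
  next
    fix x y assume "x \<in> ?S" "y \<in> ?S"
    then obtain f g where "x = aug_l act f" "y = aug_l act g" "int_part f = 0" "int_part g = 0"
      by auto
    then show "x + y \<in> ?S"
      by (intro image_eqI[of _ _ "f + g"]) (simp_all add: additive.add[OF additive_aug] int_part_add)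
  next
    fix x assume "x \<in> ?S"
    then obtain f where "x = aug_l act f" "int_part f = 0"
      by auto
    then show "- x \<in> ?S"
      by (intro image_eqI[of _ _ "- f"])
        (simp_all add: additive.minus[OF additive_aug] additive.minus[OF additive_int_part])
  qed
  moreover have "b \<cdot> c \<in> ?S" for b c
    by (rule image_eqI[of _ _ "Poly_Mapping.single c (0, b)"]) (simp_all add: aug_single act_pure)
  ultimately have "a \<in> ?S"
    by (rule in_subspace_if_products)
  then obtain f where "aug_l act f = a" "int_part f = 0"
    by auto
  then show ?thesis
    by (intro exI[of _ "free_gen a - f"])
      (simp add: aug_ker_def additive.diff[OF additive_aug] int_part_diff)
qed

definition ker_lift :: "'r \<Rightarrow> ('r \<Rightarrow>\<^sub>0 'r unitz)" where
  "ker_lift a = (SOME k. k \<in> aug_ker \<and> int_part k = frag_of a)"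

lemma ker_lift_in_aug_ker: "ker_lift a \<in> aug_ker"
  and int_part_ker_lift: "int_part (ker_lift a) = frag_of a"
  using someI_ex[OF exists_ker_lift[of a]] by (simp_all add: ker_lift_def)

definition scaled_aug_ker :: "('r \<Rightarrow>\<^sub>0 'r unitz) set" where
  "scaled_aug_ker = zsmul.span {free_act (0, a) j | a j. j \<in> aug_ker}"

lemma tensor_rel_in_scaled_aug_ker:
  assumes "x \<in> tensor_rel UNIV UNIV (\<cdot>) (\<cdot>)"
  shows "frag_lift (\<lambda>(a, b). Poly_Mapping.single b (0, a)) x \<in> scaled_aug_ker"
    (is "frag_lift ?\<Lambda> x \<in> _")
  unfolding scaled_aug_ker_def
proof (rule tensor_rel_universal[OF zsmul.subspace_span _ _ _ assms])
  have gen: "free_act (0, a) j \<in> zsmul.span {free_act (0, a) j | a j. j \<in> aug_ker}"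
    if "j \<in> aug_ker" for a j
    using that by (auto intro: zsmul.span_base)
  fix a a' x :: 'r
  have "?\<Lambda> (a + a', x) - ?\<Lambda> (a, x) - ?\<Lambda> (a', x) = 0"
    by (simp flip: single_diff)
  then show "?\<Lambda> (a + a', x) - ?\<Lambda> (a, x) - ?\<Lambda> (a', x)
      \<in> zsmul.span {free_act (0, a) j | a j. j \<in> aug_ker}"
    by (simp only: zsmul.span_zero)
  fix x' :: 'r
  have "?\<Lambda> (a, x + x') - ?\<Lambda> (a, x) - ?\<Lambda> (a, x') =
      free_act (0, a) (free_gen (x + x') - free_gen x - free_gen x')"
    by (simp add: additive.diff[OF additive_free_act_right] free_act_free_gen)
  moreover have "free_gen (x + x') - free_gen x - free_gen x' \<in> aug_ker"
    by (simp add: aug_ker_def additive.diff[OF additive_aug])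
  ultimately show "?\<Lambda> (a, x + x') - ?\<Lambda> (a, x) - ?\<Lambda> (a, x')
      \<in> zsmul.span {free_act (0, a) j | a j. j \<in> aug_ker}"
    using gen by simp
  fix s :: 'r
  have "?\<Lambda> (a \<cdot> s, x) - ?\<Lambda> (a, s \<cdot> x) =
      free_act (0, a) (Poly_Mapping.single x (0, s) - free_gen (s \<cdot> x))"
    by (simp add: additive.diff[OF additive_free_act_right] free_act_free_gen umul_pure)
  moreover have "Poly_Mapping.single x (0, s) - free_gen (s \<cdot> x) \<in> aug_ker"
    by (simp add: aug_ker_def additive.diff[OF additive_aug] aug_single act_pure)
  ultimately show "?\<Lambda> (a \<cdot> s, x) - ?\<Lambda> (a, s \<cdot> x) \<in> zsmul.span {free_act (0, a) j | a j. j \<in> aug_ker}"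
    using gen by simp
qed

lemma aug_ker_int_part_zero:
  assumes "k \<in> aug_ker" and "int_part k = 0"
  shows "k \<in> scaled_aug_ker"
proof -
  have fst0: "fst (Poly_Mapping.lookup k x) = 0" for x
    using arg_cong[OF assms(2), of "\<lambda>f. Poly_Mapping.lookup f x"] by simp
  then have pure: "(0, snd (Poly_Mapping.lookup k x)) = Poly_Mapping.lookup k x" for x
    by (metis prod.collapse)
  define w where "w = (\<Sum>x\<in>Poly_Mapping.keys k. frag_of (snd (Poly_Mapping.lookup k x), x))"
  have "frag_lift (\<lambda>(a, b). a \<cdot> b) w = (\<Sum>x\<in>Poly_Mapping.keys k. snd (Poly_Mapping.lookup k x) \<cdot> x)"
    by (simp add: w_def frag_lift_sum)
  also have "\<dots> = aug_l act k"
    unfolding aug_l_def by (simp add: act_def fst0)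
  finally have "w \<in> tensor_rel UNIV UNIV (\<cdot>) (\<cdot>)"
    using assms(1) by (intro products_kernel) (simp add: aug_ker_def)
  moreover have "frag_lift (\<lambda>(a, b). Poly_Mapping.single b (0, a)) w = k"
    unfolding w_def frag_lift_sum by (simp add: pure poly_mapping_sum_single)
  ultimately show ?thesis
    by (metis tensor_rel_in_scaled_aug_ker)
qed

lemma aug_ker_eq_frag_lift_mod:
  assumes "additive_mod aug_ker S u"
    and linear: "\<And>s j. j \<in> aug_ker \<Longrightarrow> u (free_act s j) - zsmul (fst s) (u j) \<in> S"
    and k: "k \<in> aug_ker"
  shows "u k - frag_lift (\<lambda>a. u (ker_lift a)) (int_part k) \<in> S"
proof -
  interpret u: additive_mod aug_ker S u
    by fact
  define l where "l = frag_lift ker_lift (int_part k)"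
  have l: "l \<in> aug_ker"
    unfolding l_def by (rule frag_lift_in_subspace[OF subspace_aug_ker]) (simp add: ker_lift_in_aug_ker)
  have "int_part l = int_part k"
    by (simp add: l_def frag_lift_hom[OF additive_int_part] int_part_ker_lift frag_lift_frag_of)
  then have "k - l \<in> scaled_aug_ker"
    by (intro aug_ker_int_part_zero)
      (simp_all add: int_part_diff zsmul.subspace_diff[OF subspace_aug_ker k l])
  then have "u (k - l) \<in> S"
    unfolding scaled_aug_ker_def
    by (rule u.vanishes_on_span[rotated 2]) (auto simp: free_act_in_aug_ker dest: linear[of _ "(0, _)"])
  from zsmul.subspace_diff[OF u.subspace_mod this u.diff[OF k l]] u.frag_lift[of "int_part k" ker_lift]
  show ?thesis
    unfolding l_def
    by (auto simp: ker_lift_in_aug_ker intro: zsmul.subspace_diff_trans[OF u.subspace_mod])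
qed

lemma free_gen_eq_frag_lift_mod:
  assumes "additive_mod (free_car aug_ker) S \<Phi>"
    and syzygy: "\<And>q. q \<in> free_car aug_ker \<Longrightarrow> aug_l free_act q = 0 \<Longrightarrow> \<Phi> q \<in> S"
    and single: "\<And>k s. k \<in> aug_ker \<Longrightarrow> \<Phi> (Poly_Mapping.single k s) - zsmul (fst s) (\<Phi> (free_gen k)) \<in> S"
    and "k \<in> aug_ker"
  shows "\<Phi> (free_gen k) - frag_lift (\<lambda>a. \<Phi> (free_gen (ker_lift a))) (int_part k) \<in> S"
proof -
  interpret \<Phi>: additive_mod "free_car aug_ker" S \<Phi>
    by fact
  have congruent: "\<Phi> p - \<Phi> q \<in> S"
    if "p \<in> free_car aug_ker" "q \<in> free_car aug_ker" "aug_l free_act p = aug_l free_act q" for p q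
  proof -
    have "p - q \<in> free_car aug_ker" "aug_l free_act (p - q) = 0"
      using that
      by (simp_all add: zsmul.subspace_diff[OF subspace_free_car] additive.diff[OF additive_aug_free])
    from zsmul.subspace_diff[OF \<Phi>.subspace_mod syzygy[OF this] \<Phi>.diff[OF that(1,2)]]
    show ?thesis
      by simp
  qed
  show ?thesis
  proof (rule aug_ker_eq_frag_lift_mod[OF _ _ assms(4)])
    show "additive_mod aug_ker S (\<lambda>k. \<Phi> (free_gen k))"
    proof
      fix k l assume "k \<in> aug_ker" "l \<in> aug_ker"
      then have "\<Phi> (free_gen (k + l)) - \<Phi> (free_gen k + free_gen l) \<in> S"
        by (intro congruent)
          (simp_all add: zsmul.subspace_add[OF subspace_free_car] zsmul.subspace_add[OF subspace_aug_ker]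
            additive.add[OF additive_aug_free])
      from zsmul.subspace_diff_trans[OF \<Phi>.subspace_mod this \<Phi>.add_mod[of "free_gen k" "free_gen l"]]
      show "\<Phi> (free_gen (k + l)) - (\<Phi> (free_gen k) + \<Phi> (free_gen l)) \<in> S"
        using \<open>k \<in> aug_ker\<close> \<open>l \<in> aug_ker\<close> by simp
    qed (simp_all add: subspace_aug_ker \<Phi>.subspace_mod)
  next
    fix s j assume "j \<in> aug_ker"
    then have "\<Phi> (free_gen (free_act s j)) - \<Phi> (Poly_Mapping.single j s) \<in> S"
      by (intro congruent) (simp_all add: free_act_in_aug_ker single_in_free_car aug_free_single)
    from zsmul.subspace_diff_trans[OF \<Phi>.subspace_mod this single[OF \<open>j \<in> aug_ker\<close>]]
    show "\<Phi> (free_gen (free_act s j)) - zsmul (fst s) (\<Phi> (free_gen j)) \<in> S" .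
  qed
qed

end

section \<open>Ext and Tor with coefficients in a null module\<close>

context t_unital_unitalization
begin

lemma ext1_cocycle_lift:
  fixes \<phi> :: "(('r \<Rightarrow>\<^sub>0 'r unitz) \<Rightarrow>\<^sub>0 'r unitz) \<Rightarrow> 'n::ab_group_add"
  assumes hom: "is_hom (free_car aug_ker) UNIV free_act aug_smul \<phi>"
    and cocycle: "\<And>q. q \<in> free_car aug_ker \<Longrightarrow> aug_l free_act q = 0 \<Longrightarrow> \<phi> q = 0"
  obtains \<psi> where "is_hom UNIV UNIV free_act aug_smul \<psi>"
    and "\<And>p. p \<in> free_car aug_ker \<Longrightarrow> \<phi> p = \<psi> (aug_l free_act p)"
proof
  have additive: "additive_mod (free_car aug_ker) {0} \<phi>"
    using hom subspace_free_car by (rule is_hom_additive_mod)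
  have single: "\<phi> (Poly_Mapping.single k s) - zsmul (fst s) (\<phi> (free_gen k)) \<in> {0}"
    if "k \<in> aug_ker" for k s
  proof -
    from that have "free_gen k \<in> free_car aug_ker"
      by simp
    with hom have "\<phi> (free_act s (free_gen k)) = aug_smul s (\<phi> (free_gen k))"
      unfolding is_hom_def by blast
    then show ?thesis
      by (simp add: aug_smul_def free_act_free_gen)
  qed
  define \<psi> :: "('r \<Rightarrow>\<^sub>0 'r unitz) \<Rightarrow> 'n"
    where "\<psi> f = frag_lift (\<lambda>a. \<phi> (free_gen (ker_lift a))) (int_part f)" for f
  have \<phi>_free_gen: "\<phi> (free_gen k) = \<psi> k" if "k \<in> aug_ker" for k
    using free_gen_eq_frag_lift_mod[OF additive _ single that] cocycle by (simp add: \<psi>_def)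
  show "is_hom UNIV UNIV free_act aug_smul \<psi>"
    by (simp add: is_hom_def \<psi>_def int_part_add frag_lift_add int_part_free_act aug_smul_def
        additive_zsmul[OF additive_frag_lift])
  fix p :: "('r \<Rightarrow>\<^sub>0 'r unitz) \<Rightarrow>\<^sub>0 'r unitz"
  assume p: "p \<in> free_car aug_ker"
  then have "\<phi> p = frag_lift (\<lambda>k. \<phi> (free_gen k)) (int_part p)"
    using additive_mod_eq_frag_lift[OF additive single p] by simp
  also have "\<dots> = frag_lift \<psi> (int_part p)"
    using p keys_int_part[of p] by (intro frag_lift_cong \<phi>_free_gen) (auto simp: free_car_def)
  also have "\<dots> = \<psi> (aug_l free_act p)"
    by (simp add: \<psi>_def[abs_def] frag_lift_int_part_aug_free)
  finally show "\<phi> p = \<psi> (aug_l free_act p)" .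
qed

definition tor_lift ::
    "'n::ab_group_add \<Rightarrow> ('r \<Rightarrow>\<^sub>0 'r unitz) \<Rightarrow> ((('r \<Rightarrow>\<^sub>0 'r unitz) \<Rightarrow>\<^sub>0 'r unitz) \<times> 'n) \<Rightarrow>\<^sub>0 int"
  where "tor_lift n f = frag_lift (\<lambda>a. frag_of (free_gen (ker_lift a), n)) (int_part f)"

lemma additive_tor_lift: "additive (tor_lift n)"
  by unfold_locales (simp add: tor_lift_def int_part_add frag_lift_add)

end

text \<open>\<open>B\<close> is the preimage, in the free abelian group on \<open>P\<^sub>1 \<times> N\<close>, of a subgroup of
  \<open>P\<^sub>1 \<otimes> N\<close> containing the boundaries.\<close>

locale tor_boundary_absorbing = t_unital_unitalization mult act umul
  for mult :: "'r::ring \<Rightarrow> 'r \<Rightarrow> 'r"  (infixl \<open>\<cdot>\<close> 70) and act umul +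
  fixes B :: "((('r \<Rightarrow>\<^sub>0 'r unitz) \<Rightarrow>\<^sub>0 'r unitz) \<times> 'n::ab_group_add \<Rightarrow>\<^sub>0 int) set"
  assumes subspace_B: "zsmul.subspace B"
    and relations_subset: "tensor_rel (free_car aug_ker) UNIV (\<lambda>p s. free_act s p) aug_smul \<subseteq> B"
    and syzygy_in_B: "q \<in> free_car aug_ker \<Longrightarrow> aug_l free_act q = 0 \<Longrightarrow> frag_of (q, n) \<in> B"
begin

lemma additive_mod_left: "additive_mod (free_car aug_ker) B (\<lambda>q. frag_of (q, n))"
  by (rule additive_mod_mono[OF additive_mod_tensor_left[OF subspace_free_car UNIV_I]
        relations_subset subspace_B])

lemma additive_mod_right: "q \<in> free_car aug_ker \<Longrightarrow> additive_mod UNIV B (\<lambda>n. frag_of (q, n))"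
  by (rule additive_mod_mono[OF additive_mod_tensor_right[OF zsmul.subspace_UNIV]
        relations_subset subspace_B])

lemma single_eq_zsmul_mod:
  assumes "k \<in> aug_ker"
  shows "frag_of (Poly_Mapping.single k s, n) - zsmul (fst s) (frag_of (free_gen k, n)) \<in> B"
proof -
  have "free_gen k \<in> free_car aug_ker"
    using assms by simp
  from tensor_rel.rel_bal[of "free_gen k" "free_car aug_ker" n UNIV "\<lambda>p s. free_act s p" s aug_smul] this
  have "frag_of (Poly_Mapping.single k s, n) - frag_of (free_gen k, zsmul (fst s) n) \<in> B"
    using relations_subset by (auto simp: free_act_free_gen aug_smul_def)
  then show ?thesis
    using additive_mod.zsmul[OF additive_mod_right[OF \<open>free_gen k \<in> free_car aug_ker\<close>] UNIV_I]
    by (blast intro: zsmul.subspace_diff_trans[OF subspace_B])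
qed

lemma free_gen_eq_tor_lift_mod: "k \<in> aug_ker \<Longrightarrow> frag_of (free_gen k, n) - tor_lift n k \<in> B"
  unfolding tor_lift_def
  by (rule free_gen_eq_frag_lift_mod[OF additive_mod_left syzygy_in_B single_eq_zsmul_mod])

lemma frag_of_eq_tor_lift_mod:
  assumes "g \<in> free_car aug_ker"
  shows "frag_of (g, n) - tor_lift n (aug_l free_act g) \<in> B"
proof -
  have "frag_of (g, n) - frag_lift (\<lambda>k. frag_of (free_gen k, n)) (int_part g) \<in> B"
    by (rule additive_mod_eq_frag_lift[OF additive_mod_left single_eq_zsmul_mod assms])
  moreover have "frag_lift (\<lambda>k. frag_of (free_gen k, n) - tor_lift n k) (int_part g) \<in> B"
    using assms keys_int_part[of g]
    by (intro frag_lift_in_subspace[OF subspace_B] free_gen_eq_tor_lift_mod) (auto simp: free_car_def)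
  then have "frag_lift (\<lambda>k. frag_of (free_gen k, n)) (int_part g) - tor_lift n (aug_l free_act g) \<in> B"
    by (simp add: frag_lift_fun_diff tor_lift_def[abs_def] frag_lift_int_part_aug_free)
  ultimately show ?thesis
    by (rule zsmul.subspace_diff_trans[OF subspace_B])
qed

lemma tor_lift_relations:
  assumes "x \<in> tensor_rel UNIV UNIV (\<lambda>p s. free_act s p) aug_smul"
  shows "frag_lift (\<lambda>(f, n). tor_lift n f) x \<in> B"
proof (rule tensor_rel_universal[OF subspace_B _ _ _ assms], goal_cases)
  case (1 f f' n)
  then show ?case
    by (simp add: additive.add[OF additive_tor_lift] zsmul.subspace_0[OF subspace_B])
next
  case (2 f n n')
  have "frag_lift (\<lambda>a. frag_of (free_gen (ker_lift a), n + n')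
      - (frag_of (free_gen (ker_lift a), n) + frag_of (free_gen (ker_lift a), n'))) (int_part f) \<in> B"
    by (intro frag_lift_in_subspace[OF subspace_B] additive_mod.add_mod[OF additive_mod_right])
      (simp_all add: ker_lift_in_aug_ker)
  then show ?case
    by (simp add: tor_lift_def frag_lift_fun_diff frag_lift_fun_add algebra_simps)
next
  case (3 f n s)
  have "frag_lift (\<lambda>a. frag_of (free_gen (ker_lift a), zsmul (fst s) n)
      - zsmul (fst s) (frag_of (free_gen (ker_lift a), n))) (int_part f) \<in> B"
    using additive_mod.zsmul[OF additive_mod_right UNIV_I] ker_lift_in_aug_ker
    by (intro frag_lift_in_subspace[OF subspace_B]) simp
  from zsmul.subspace_neg[OF subspace_B this] show ?case
    by (simp add: aug_smul_def tor_lift_def int_part_free_act additive_zsmul[OF additive_frag_lift]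
        frag_lift_fun_diff frag_lift_fun_zsmul)
qed

lemma cycle_in_B:
  assumes "Poly_Mapping.keys x \<subseteq> free_car aug_ker \<times> UNIV"
    and "push (\<lambda>(p, n). (aug_l free_act p, n)) x \<in> tensor_rel UNIV UNIV (\<lambda>p s. free_act s p) aug_smul"
  shows "x \<in> B"
proof -
  let ?L = "frag_lift (\<lambda>z. tor_lift (snd z) (aug_l free_act (fst z))) x"
  have "?L \<in> B"
    using tor_lift_relations[OF assms(2)] by (simp add: frag_lift_push split_beta)
  moreover have "frag_lift (\<lambda>z. frag_of z - tor_lift (snd z) (aug_l free_act (fst z))) x \<in> B"
    using assms(1) frag_of_eq_tor_lift_mod by (intro frag_lift_in_subspace[OF subspace_B]) auto
  then have "x - ?L \<in> B"
    by (simp add: frag_lift_fun_diff frag_lift_frag_of)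
  ultimately have "x - ?L + ?L \<in> B"
    by (intro zsmul.subspace_add[OF subspace_B])
  then show "x \<in> B"
    by simp
qed

end

context t_unital_unitalization
begin

lemma tor_boundary_absorbing_boundaries:
  "tor_boundary_absorbing mult act umul
    {x :: ((('r \<Rightarrow>\<^sub>0 'r unitz) \<Rightarrow>\<^sub>0 'r unitz) \<times> 'n::ab_group_add) \<Rightarrow>\<^sub>0 int.
      \<exists>y. Poly_Mapping.keys y \<subseteq> free_car {q \<in> free_car aug_ker. aug_l free_act q = 0} \<times> UNIV \<and>
        push (\<lambda>(q, n). (aug_l free_act q, n)) y - x
          \<in> tensor_rel (free_car aug_ker) UNIV (\<lambda>p s. free_act s p) aug_smul}"
  (is "tor_boundary_absorbing _ _ _ {x. \<exists>y. _ \<subseteq> ?P2 \<times> UNIV \<and> push ?d2 y - x \<in> ?T}")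
proof
  have T: "zsmul.subspace ?T"
    by (rule subspace_tensor_rel)
  then show "zsmul.subspace {x. \<exists>y. Poly_Mapping.keys y \<subseteq> ?P2 \<times> UNIV \<and> push ?d2 y - x \<in> ?T}"
    by (rule subspace_push_preimage)
  show "?T \<subseteq> {x. \<exists>y. Poly_Mapping.keys y \<subseteq> ?P2 \<times> UNIV \<and> push ?d2 y - x \<in> ?T}"
  proof
    fix x assume "x \<in> ?T"
    then have "push ?d2 0 - x \<in> ?T"
      using zsmul.subspace_neg[OF T] by (simp add: additive.zero[OF additive_push])
    then show "x \<in> {x. \<exists>y. Poly_Mapping.keys y \<subseteq> ?P2 \<times> UNIV \<and> push ?d2 y - x \<in> ?T}"
      by (intro CollectI exI[of _ 0] conjI) simp_all
  qed
  fix q :: "('r \<Rightarrow>\<^sub>0 'r unitz) \<Rightarrow>\<^sub>0 'r unitz" and n :: 'n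
  assume "q \<in> free_car aug_ker" "aug_l free_act q = 0"
  moreover have "push ?d2 (frag_of (free_gen q, n)) = frag_of (q, n)"
    by (simp add: push_eq_frag_lift)
  ultimately show "frag_of (q, n) \<in> {x. \<exists>y. Poly_Mapping.keys y \<subseteq> ?P2 \<times> UNIV \<and> push ?d2 y - x \<in> ?T}"
    by (intro CollectI exI[of _ "frag_of (free_gen q, n)"] conjI) (simp_all add: zsmul.subspace_0[OF T])
qed

lemma tor1_cycle_is_boundary:
  fixes x :: "((('r \<Rightarrow>\<^sub>0 'r unitz) \<Rightarrow>\<^sub>0 'r unitz) \<times> 'n::ab_group_add) \<Rightarrow>\<^sub>0 int"
  assumes "Poly_Mapping.keys x \<subseteq> free_car aug_ker \<times> UNIV"
    and "push (\<lambda>(p, n). (aug_l free_act p, n)) x \<in> tensor_rel UNIV UNIV (\<lambda>p s. free_act s p) aug_smul"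
  shows "\<exists>y. Poly_Mapping.keys y \<subseteq> free_car {q \<in> free_car aug_ker. aug_l free_act q = 0} \<times> UNIV \<and>
    push (\<lambda>(q, n). (aug_l free_act q, n)) y - x
      \<in> tensor_rel (free_car aug_ker) UNIV (\<lambda>p s. free_act s p) aug_smul"
  using tor_boundary_absorbing.cycle_in_B[OF tor_boundary_absorbing_boundaries assms] by blast

end

lemma unitalization_times: "unitalization ((*) :: 'r::ring \<Rightarrow> 'r \<Rightarrow> 'r) lact_R umult"
  by unfold_locales (simp_all add: algebra_simps lact_R_def umult_def)

lemma unitalization_opposite:
  "unitalization (\<lambda>a b :: 'r::ring. b * a) (\<lambda>s a. ract_R a s) (\<lambda>s t. umult t s)"
  by unfold_locales (simp_all add: algebra_simps ract_R_def umult_def)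

lemma t_unital_span_products:
  assumes "t_unital TYPE('r::ring)"
  shows "zsmul.span {a * b | a b :: 'r. True} = UNIV"
proof -
  have "r \<in> zsmul.span {a * b | a b :: 'r. True}" for r
  proof -
    obtain x where "frag_lift (\<lambda>(a, b). a * b) x = r"
      using assms by (auto simp: t_unital_def mult_map_eq_frag_lift)
    moreover have "frag_lift (\<lambda>(a, b). a * b) x \<in> zsmul.span {a * b | a b :: 'r. True}"
      by (rule frag_lift_in_subspace[OF zsmul.subspace_span]) (auto intro: zsmul.span_base)
    ultimately show ?thesis
      by simp
  qed
  then show ?thesis
    by blast
qed

lemma t_unital_in_subspace:
  "t_unital TYPE('r::ring) \<Longrightarrow> zsmul.subspace S \<Longrightarrow> (\<And>a b :: 'r. a * b \<in> S) \<Longrightarrow> r \<in> S"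
  using zsmul.span_minimal[of "{a * b | a b :: 'r. True}" S] t_unital_span_products by blast

lemma t_unital_times:
  assumes "t_unital TYPE('r::ring)"
  shows "t_unital_unitalization ((*) :: 'r \<Rightarrow> 'r \<Rightarrow> 'r) lact_R umult"
proof (intro t_unital_unitalization.intro unitalization_times t_unital_unitalization_axioms.intro)
  show "zsmul.span {a * b | a b :: 'r. True} = UNIV"
    by (rule t_unital_span_products[OF assms])
  show "x \<in> tensor_rel UNIV UNIV (*) (*)" if "frag_lift (\<lambda>(a, b). a * b) x = (0::'r)" for x
    using assms that by (simp add: t_unital_def mult_map_eq_frag_lift)
qed

lemma t_unital_opposite:
  assumes "t_unital TYPE('r::ring)"
  shows "t_unital_unitalization (\<lambda>a b :: 'r. b * a) (\<lambda>s a. ract_R a s) (\<lambda>s t. umult t s)"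
proof (intro t_unital_unitalization.intro unitalization_opposite t_unital_unitalization_axioms.intro)
  have "{b * a | a b :: 'r. True} = {a * b | a b. True}"
    by blast
  then show "zsmul.span {b * a | a b :: 'r. True} = UNIV"
    using t_unital_span_products[OF assms] by simp
  fix x :: "('r \<times> 'r) \<Rightarrow>\<^sub>0 int"
  assume "frag_lift (\<lambda>(a, b). b * a) x = 0"
  then have "mult_map (push prod.swap x) = 0"
    by (simp add: mult_map_eq_frag_lift frag_lift_push case_prod_unfold)
  then have "push prod.swap (push prod.swap x) \<in> tensor_rel UNIV UNIV (\<lambda>a b. b * a) (\<lambda>a b. b * a)"
    using assms by (intro tensor_rel_swap) (simp add: t_unital_def)
  moreover have "push prod.swap (push prod.swap x) = x"
    unfolding push_eq_frag_lift[of prod.swap "push prod.swap x"] frag_lift_push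
    by (simp add: frag_lift_frag_of)
  ultimately show "x \<in> tensor_rel UNIV UNIV (\<lambda>a b. b * a) (\<lambda>a b. b * a)"
    by simp
qed

lemma lact_mod_null_module: "null_module smul \<Longrightarrow> lact_mod smul = aug_smul"
  by (simp add: fun_eq_iff lact_mod_def null_module_def aug_smul_def)

lemma tensor_is_zero_if_products_vanish:
  fixes ract :: "'r::ring \<Rightarrow> 's \<Rightarrow> 'r" and lact :: "'s \<Rightarrow> 'n::ab_group_add \<Rightarrow> 'n"
  assumes "t_unital TYPE('r)" and products: "\<And>a b n. \<exists>s. ract a s = a * b \<and> lact s n = 0"
  shows "tensor_is_zero (UNIV::'r set) (UNIV::'n set) ract lact"
proof -
  let ?T = "tensor_rel (UNIV::'r set) (UNIV::'n set) ract lact"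
  have "frag_of (a, n) \<in> ?T" for a n
  proof -
    interpret left: additive_mod UNIV ?T "\<lambda>a. frag_of (a, n)"
      by (rule additive_mod_tensor_left) simp_all
    have "b * c \<in> {a. a \<in> UNIV \<and> frag_of (a, n) \<in> ?T}" for b c
    proof -
      obtain s where s: "ract b s = b * c" "lact s n = 0"
        using products by blast
      have "frag_of (b, 0) \<in> ?T"
        by (rule additive_mod.zero[OF additive_mod_tensor_right[OF zsmul.subspace_UNIV UNIV_I]])
      from zsmul.subspace_add[OF subspace_tensor_rel tensor_rel.rel_bal[of b UNIV n UNIV ract s lact] this]
        s
      show ?thesis
        by simp
    qed
    then show ?thesis
      using t_unital_in_subspace[OF assms(1) left.subspace_vanishing] by blast
  qed
  then show ?thesis
    unfolding tensor_is_zero_def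
    by (metis frag_lift_frag_of frag_lift_in_subspace subspace_tensor_rel prod.collapse)
qed

lemma hom_zero_if_products_vanish:
  fixes lactP :: "'s \<Rightarrow> 'r::ring \<Rightarrow> 'r" and lactN :: "'s \<Rightarrow> 'n::ab_group_add \<Rightarrow> 'n"
  assumes "t_unital TYPE('r)" and products: "\<And>a b. \<exists>s. lactP s b = a * b \<and> (\<forall>y. lactN s y = 0)"
    and hom: "is_hom (UNIV::'r set) (UNIV::'n set) lactP lactN f"
  shows "f a = 0"
proof -
  interpret f: additive_mod UNIV "{0}" f
    using hom zsmul.subspace_UNIV by (rule is_hom_additive_mod)
  have "b * c \<in> {a. a \<in> UNIV \<and> f a \<in> {0}}" for b c
  proof -
    obtain s where "lactP s c = b * c" "\<forall>y. lactN s y = 0"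
      using products by blast
    moreover have "f (lactP s c) = lactN s (f c)"
      using hom by (simp add: is_hom_def)
    ultimately show ?thesis
      by simp
  qed
  then show ?thesis
    using t_unital_in_subspace[OF assms(1) f.subspace_vanishing] by blast
qed

lemma aug_r_eq_aug_l: "aug_r act = aug_l (\<lambda>s x. act x s)"
  by (simp add: fun_eq_iff aug_r_def aug_l_def)

lemma Ext1_vanishes_null_module:
  fixes smul :: "'r::ring \<Rightarrow> 'n::ab_group_add \<Rightarrow> 'n"
  assumes "t_unital TYPE('r)" and "null_module smul"
  shows "Ext1_vanishes (UNIV::'r set) lact_R (UNIV::'n set) (lact_mod smul)"
proof -
  interpret t_unital_unitalization "(*) :: 'r \<Rightarrow> 'r \<Rightarrow> 'r" lact_R umult
    by (rule t_unital_times[OF assms(1)])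
  have free_lact: "free_lact = free_act"
    by (simp add: fun_eq_iff free_lact_def free_act_def)
  have kernel: "{f \<in> free_car UNIV. aug_l lact_R f = 0} = aug_ker"
    by (simp add: aug_ker_def free_car_def)
  show ?thesis
    unfolding Ext1_vanishes_def Let_def lact_mod_null_module[OF assms(2)] free_lact kernel
  proof (intro allI impI)
    fix \<phi> :: "(('r \<Rightarrow>\<^sub>0 'r unitz) \<Rightarrow>\<^sub>0 'r unitz) \<Rightarrow> 'n"
    assume asm: "is_hom (free_car aug_ker) UNIV free_act aug_smul \<phi> \<and>
      (\<forall>q\<in>free_car {g \<in> free_car aug_ker. aug_l free_act g = 0}. \<phi> (aug_l free_act q) = 0)"
    have "\<phi> q = 0" if "q \<in> free_car aug_ker" "aug_l free_act q = 0" for q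
    proof -
      from that have "free_gen q \<in> free_car {g \<in> free_car aug_ker. aug_l free_act g = 0}"
        by simp
      with asm have "\<phi> (aug_l free_act (free_gen q)) = 0"
        by blast
      then show ?thesis
        by simp
    qed
    with asm obtain \<psi> where "is_hom UNIV UNIV free_act aug_smul \<psi>"
      and "\<And>p. p \<in> free_car aug_ker \<Longrightarrow> \<phi> p = \<psi> (aug_l free_act p)"
      using ext1_cocycle_lift by blast
    then show "\<exists>\<psi>. is_hom (free_car UNIV) UNIV free_act aug_smul \<psi> \<and>
      (\<forall>p\<in>free_car aug_ker. \<phi> p = \<psi> (aug_l free_act p))"
      by (auto simp: free_car_def)
  qed
qed

lemma Tor1_vanishes_null_module:
  fixes smul :: "'r::ring \<Rightarrow> 'n::ab_group_add \<Rightarrow> 'n"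
  assumes "t_unital TYPE('r)" and "null_module smul"
  shows "Tor1_vanishes (UNIV::'r set) ract_R (UNIV::'n set) (lact_mod smul)"
proof -
  interpret t_unital_unitalization "\<lambda>a b :: 'r. b * a" "\<lambda>s a. ract_R a s" "\<lambda>s t. umult t s"
    by (rule t_unital_opposite[OF assms(1)])
  have free_ract: "free_ract = (\<lambda>p s. free_act s p)"
    by (simp add: fun_eq_iff free_ract_def free_act_def)
  have aug_free: "aug_r (\<lambda>p s. free_act s p) = aug_l free_act"
    by (simp add: aug_r_eq_aug_l)
  have kernel: "{f \<in> UNIV. aug_r ract_R f = 0} = aug_ker"
    by (simp add: aug_ker_def aug_r_eq_aug_l)
  show ?thesis
    unfolding Tor1_vanishes_def Let_def lact_mod_null_module[OF assms(2)] free_ract aug_free kernel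
      free_car_UNIV
    by (intro allI impI, elim conjE, rule tor1_cycle_is_boundary)
qed

theorem lemma5p5:
  fixes smul :: "'r::ring \<Rightarrow> 'n::ab_group_add \<Rightarrow> 'n"
  assumes "t_unital TYPE('r)"
    and "left_module smul"
    and "null_module smul"
  shows "(tensor_is_zero (UNIV::'r set) (UNIV::'n set) (*) smul
          \<and> tensor_is_zero (UNIV::'r set) (UNIV::'n set) ract_R (lact_mod smul)
          \<and> Tor1_vanishes (UNIV::'r set) ract_R (UNIV::'n set) (lact_mod smul))
       \<and> ((\<forall>f. is_hom (UNIV::'r set) (UNIV::'n set) (*) smul f \<longrightarrow> (\<forall>a. f a = 0))
          \<and> (\<forall>f. is_hom (UNIV::'r set) (UNIV::'n set) lact_R (lact_mod smul) f \<longrightarrow> (\<forall>a. f a = 0))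
          \<and> Ext1_vanishes (UNIV::'r set) lact_R (UNIV::'n set) (lact_mod smul))"
proof (intro conjI allI impI)
  have null: "smul r x = 0" for r x
    using assms(3) by (simp add: null_module_def)
  show "tensor_is_zero (UNIV::'r set) (UNIV::'n set) (*) smul"
    by (rule tensor_is_zero_if_products_vanish[OF assms(1)]) (use null in auto)
  show "tensor_is_zero (UNIV::'r set) (UNIV::'n set) ract_R (lact_mod smul)"
  proof (rule tensor_is_zero_if_products_vanish[OF assms(1)])
    fix a b :: 'r and n :: 'n
    show "\<exists>s. ract_R a s = a * b \<and> lact_mod smul s n = 0"
      by (rule exI[of _ "(0, b)"]) (simp add: ract_R_def lact_mod_def null)
  qed
  show "Tor1_vanishes (UNIV::'r set) ract_R (UNIV::'n set) (lact_mod smul)"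
    by (rule Tor1_vanishes_null_module[OF assms(1,3)])
  show "Ext1_vanishes (UNIV::'r set) lact_R (UNIV::'n set) (lact_mod smul)"
    by (rule Ext1_vanishes_null_module[OF assms(1,3)])
  fix f a
  show "f a = 0" if "is_hom (UNIV::'r set) (UNIV::'n set) (*) smul f"
    by (rule hom_zero_if_products_vanish[OF assms(1) _ that]) (use null in auto)
  show "f a = 0" if "is_hom (UNIV::'r set) (UNIV::'n set) lact_R (lact_mod smul) f"
  proof (rule hom_zero_if_products_vanish[OF assms(1) _ that])
    fix b c :: 'r
    show "\<exists>s. lact_R s c = b * c \<and> (\<forall>y. lact_mod smul s y = 0)"
      by (rule exI[of _ "(0, b)"]) (simp add: lact_R_def lact_mod_def null)
  qed
qed

end
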